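(* Let $f \in \mathbb{F}_q[x]$ be a squarefree polynomial of degree $n$. Let $\tilde{f}$ be the product of the irreducible factors of $f$ of degree higher than $n^{2 / 3}$. Then the order of the Frobenius automorphism $\sigma$ of $\mathbb{F}_q[x] / \tilde{f}$ (the $\mathbb{F}_q$-algebra automorphism determined by $x\mapsto x^q$) is less than $\exp\!\left(\frac{2}{3}\sqrt[3]{n} \ln n\right)$.
   Formalization: The bound on the order of the Frobenius automorphism is asserted only for degree n >= 4. The statement above fails without it. *)

theory Defs
  imports Complex_Main "HOL-Computational_Algebra.Computational_Algebra"
begin

definition high_part :: "'a::{field_gcd} poly \<Rightarrow> 'a poly" where
  "high_part f = (\<Prod>p \<in> {p \<in> prime_factors f. real (degree p) > real (degree f) powr (2/3)}. p)"

text \<open>Frobenius map on F_q[x]/h, residues represented by polynomials g with g mod h = g;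
  it is the F_q-algebra map determined by x to x^q, i.e. g(x) to g(x^q) mod h.\<close>
definition frobenius :: "'a::{field_gcd,finite} poly \<Rightarrow> 'a poly \<Rightarrow> 'a poly" where
  "frobenius h g = (g \<circ>\<^sub>p monom 1 (card (UNIV :: 'a set))) mod h"

definition frobenius_order :: "'a::{field_gcd,finite} poly \<Rightarrow> nat" where
  "frobenius_order h = (LEAST k. k > 0 \<and> (\<forall>g. g mod h = g \<longrightarrow> (frobenius h ^^ k) g = g))"

end

theory Submission
  imports
    Defs
    "HOL-Library.Cardinality"
    "HOL-Number_Theory.Cong"
    "HOL-Analysis.Complex_Transcendental"
begin

(* Over F_q the Frobenius is g \<mapsto> g^q mod h, since (a + b)^q = a^q + b^q and c^q = c for
   constants. For a prime p of degree d, multiplication by a unit permutes the q^d - 1 nonzero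
   residues mod p, so g^(q^d) = g (mod p); by the Chinese remainder theorem the order of the
   Frobenius modulo the product of the high-degree primes is at most the lcm, hence at most the
   product, of their degrees d_p. These satisfy d_p > a := n^(2/3) and sum d_p \<le> n = a t with
   t := n^(1/3), so there are fewer than t of them, and ln d_p \<le> ln a - 1 + d_p / a gives
   ln (prod d_p) < t ln a = 2/3 n^(1/3) ln n once ln a > 1, i.e. n \<ge> 5. *)

lemma prime_elem_imp_degree_pos:
  fixes p :: "'a::field poly"
  assumes "prime_elem p"
  shows "0 < degree p"
  using assms is_unit_iff_degree[of p] prime_elem_not_unit by fastforce

lemma card_degree_less:
  assumes "0 < d"
  shows "card {p :: 'a::{zero,finite} poly. degree p < d} = CARD('a) ^ d"
proof -
  have "{p :: 'a poly. degree p < d} = Poly ` {xs. length xs = d}"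
  proof (intro set_eqI iffI)
    fix p :: "'a poly"
    assume "p \<in> {p. degree p < d}"
    then have "length (coeffs p) \<le> d"
      by (cases "p = 0") (simp_all add: length_coeffs_degree)
    then show "p \<in> Poly ` {xs. length xs = d}"
      by (intro image_eqI[of _ _ "coeffs p @ replicate (d - length (coeffs p)) 0"]) auto
  next
    fix p :: "'a poly"
    assume "p \<in> Poly ` {xs. length xs = d}"
    then obtain xs where "p = Poly xs" "length xs = d"
      by blast
    then have "degree p \<le> d - 1"
      by (intro degree_le) (simp add: nth_default_beyond)
    then show "p \<in> {p. degree p < d}"
      using assms by simp
  qed
  moreover have "inj_on Poly {xs :: 'a list. length xs = d}"
  proof (rule inj_onI)
    fix xs ys :: "'a list"
    assume "xs \<in> {xs. length xs = d}" "ys \<in> {xs. length xs = d}"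
      and "Poly xs = Poly ys"
    then show "xs = ys"
      by (metis (mono_tags, lifting) coeff_Poly_eq mem_Collect_eq nth_default_nth nth_equalityI)
  qed
  ultimately show ?thesis
    using card_lists_length_eq[of "UNIV :: 'a set" d] by (simp add: card_image)
qed

lemma finite_degree_less: "finite {p :: 'a::{zero,finite} poly. degree p < d}"
proof (cases "d = 0")
  case False
  then show ?thesis
    using card_degree_less[of d, where 'a='a] finite_UNIV_card_ge_0[where 'a='a]
    by (intro card_ge_0_finite) simp
qed simp

lemma bij_betw_mult_mod_nonzero_residues:
  fixes p g :: "'a::{field_gcd,finite} poly"
  assumes p: "prime_elem p" and "\<not> p dvd g"
  defines "S \<equiv> {r. degree r < degree p} - {0}"
  shows "bij_betw (\<lambda>r. g * r mod p) S S"
proof -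
  have not_dvd_S: "\<not> p dvd r" if "r \<in> S" for r
    using that dvd_imp_degree[of p r] by (auto simp: S_def)
  have "(\<lambda>r. g * r mod p) ` S \<subseteq> S"
  proof
    fix s
    assume "s \<in> (\<lambda>r. g * r mod p) ` S"
    then obtain r where "r \<in> S" "s = g * r mod p"
      by blast
    moreover have "\<not> p dvd g * r"
      using p \<open>\<not> p dvd g\<close> not_dvd_S[OF \<open>r \<in> S\<close>] by (simp add: prime_elem_dvd_mult_iff)
    ultimately show "s \<in> S"
      using p degree_mod_less[of p "g * r"] by (auto simp: S_def mod_eq_0_iff_dvd)
  qed
  moreover have "inj_on (\<lambda>r. g * r mod p) S"
  proof (rule inj_onI)
    fix r s
    assume "r \<in> S" "s \<in> S" "g * r mod p = g * s mod p"
    moreover have "coprime g p"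
      using prime_elem_imp_coprime[OF p \<open>\<not> p dvd g\<close>] by (simp add: coprime_commute)
    ultimately have "[r = s] (mod p)"
      using cong_mult_lcancel[of g p r s] by (simp add: cong_def)
    then show "r = s"
      using \<open>r \<in> S\<close> \<open>s \<in> S\<close> by (simp add: S_def cong_def mod_poly_less)
  qed
  moreover have "finite S"
    by (simp add: S_def finite_degree_less)
  ultimately show ?thesis
    using endo_inj_surj by (simp add: bij_betw_def)
qed

lemma euler_theorem_poly:
  fixes p g :: "'a::{field_gcd,finite} poly"
  assumes p: "prime_elem p" and "\<not> p dvd g"
  shows "[g ^ (CARD('a) ^ degree p - 1) = 1] (mod p)"
proof -
  define S where "S = {r :: 'a poly. degree r < degree p} - {0}"
  have "degree p > 0"
    using p by (rule prime_elem_imp_degree_pos)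
  then have card_S: "card S = CARD('a) ^ degree p - 1"
    by (simp add: S_def card_degree_less card_Diff_singleton)
  have "[g ^ card S * \<Prod>S = \<Prod>r\<in>S. g * r] (mod p)"
    by (simp add: prod.distrib)
  also have "[(\<Prod>r\<in>S. g * r) = (\<Prod>r\<in>S. g * r mod p)] (mod p)"
    by (rule cong_prod) (simp add: cong_def)
  also have "(\<Prod>r\<in>S. g * r mod p) = 1 * \<Prod>S"
    using prod.reindex_bij_betw[OF bij_betw_mult_mod_nonzero_residues[OF assms], of id]
    by (simp add: S_def)
  finally have "[g ^ card S * \<Prod>S = 1 * \<Prod>S] (mod p)" .
  moreover have "coprime (\<Prod>S) p"
  proof (rule prod_coprime_left)
    fix r
    assume "r \<in> S"
    then have "\<not> p dvd r"
      using dvd_imp_degree[of p r] by (auto simp: S_def)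
    then show "coprime r p"
      using prime_elem_imp_coprime[OF p] coprime_commute by blast
  qed
  ultimately show ?thesis
    by (metis cong_mult_rcancel card_S)
qed

lemma fermat_theorem_poly:
  fixes p g :: "'a::{field_gcd,finite} poly"
  assumes p: "prime_elem p"
  shows "[g ^ (CARD('a) ^ degree p) = g] (mod p)"
proof (cases "p dvd g")
  case True
  moreover have "g dvd g ^ (CARD('a) ^ degree p)"
    using finite_UNIV_card_ge_0[where 'a='a] by simp
  ultimately show ?thesis
    by (metis cong_def dvd_trans mod_eq_0_iff_dvd)
next
  case False
  have "g ^ (CARD('a) ^ degree p) = g * g ^ (CARD('a) ^ degree p - 1)"
    using finite_UNIV_card_ge_0[where 'a='a] by (simp flip: power_Suc)
  also have "[\<dots> = g * 1] (mod p)"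
    by (intro cong_scalar_left euler_theorem_poly p False)
  finally show ?thesis
    by simp
qed

lemma fermat_theorem_poly_multiple:
  fixes p g :: "'a::{field_gcd,finite} poly"
  assumes p: "prime_elem p" and "degree p dvd k"
  shows "[g ^ (CARD('a) ^ k) = g] (mod p)"
proof -
  obtain m where "k = degree p * m"
    using assms by blast
  moreover have "[g ^ (CARD('a) ^ (degree p * m)) = g] (mod p)"
  proof (induction m)
    case 0
    then show ?case
      by simp
  next
    case (Suc m)
    have "g ^ (CARD('a) ^ (degree p * Suc m))
        = (g ^ (CARD('a) ^ (degree p * m))) ^ (CARD('a) ^ degree p)"
      by (simp add: power_add power_mult[symmetric] mult.commute)
    also have "[\<dots> = g ^ (CARD('a) ^ (degree p * m))] (mod p)"
      by (rule fermat_theorem_poly[OF p])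
    also have "[g ^ (CARD('a) ^ (degree p * m)) = g] (mod p)"
      by (rule Suc.IH)
    finally show ?case .
  qed
  ultimately show ?thesis
    by simp
qed

lemma power_card_UNIV_eq_self:
  fixes c :: "'a::{field_gcd,finite}"
  shows "c ^ CARD('a) = c"
proof -
  have "[[:c:] ^ (CARD('a) ^ degree [:0, 1::'a:]) = [:c:]] (mod [:0, 1:])"
    by (rule fermat_theorem_poly) (simp add: prime_elem_linear_field_poly)
  then have "[:c ^ CARD('a):] mod [:0, 1:] = [:c:] mod [:0, 1:]"
    by (simp add: cong_def poly_const_pow)
  then show ?thesis
    by (simp add: mod_poly_less)
qed

lemma of_nat_card_UNIV_choose_eq_0:
  assumes "0 < k" "k < CARD('a::{field_gcd,finite})"
  shows "(of_nat (CARD('a) choose k) :: 'a) = 0"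
proof -
  define q where "q = CARD('a)"
  define P :: "'a poly" where "P = [:1, 1:] ^ q - monom 1 q - 1"
  have coeff_P: "coeff P i = (if i \<le> q then of_nat (q choose i) else 0)
      - (if i = q then 1 else 0) - (if i = 0 then 1 else 0)" for i
    using coeff_linear_poly_power[of i q "1::'a" 1]
    by (auto simp: P_def coeff_eq_0 degree_linear_power)
  have "q > 0"
    using finite_UNIV_card_ge_0[where 'a='a] by (simp add: q_def)
  then have "degree P < q"
    using degree_le[of "q - 1" P] by (force simp: coeff_P)
  moreover have "poly P x = 0" for x
    using power_card_UNIV_eq_self[of x] power_card_UNIV_eq_self[of "1 + x"]
    by (simp add: P_def poly_monom q_def)
  ultimately have "P = 0"
    using card_poly_roots_bound[of P] by (auto simp: q_def)
  then have "coeff P k = 0"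
    by simp
  then show ?thesis
    using assms by (simp add: coeff_P q_def)
qed

lemma add_power_card_UNIV:
  fixes a b :: "'a::{field_gcd,finite} poly"
  shows "(a + b) ^ CARD('a) = a ^ CARD('a) + b ^ CARD('a)"
proof -
  define q where "q = CARD('a)"
  define t where "t k = of_nat (q choose k) * a ^ k * b ^ (q - k)" for k
  have "(a + b) ^ q = (\<Sum>k\<le>q. t k)"
    unfolding t_def by (rule binomial_ring)
  also have "\<dots> = (\<Sum>k\<in>{0, q}. t k)"
    by (rule sum.mono_neutral_right)
      (auto simp: t_def q_def of_nat_poly of_nat_card_UNIV_choose_eq_0)
  also have "\<dots> = a ^ q + b ^ q"
    using finite_UNIV_card_ge_0[where 'a='a] by (simp add: t_def q_def)
  finally show ?thesis
    by (simp add: q_def)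
qed

lemma pcompose_monom_card_UNIV:
  fixes p :: "'a::{field_gcd,finite} poly"
  shows "p \<circ>\<^sub>p monom 1 CARD('a) = p ^ CARD('a)"
proof (induction p)
  case 0
  then show ?case
    using finite_UNIV_card_ge_0[where 'a='a] by simp
next
  case (pCons c p)
  have "pCons c p = [:c:] + monom 1 1 * p"
    by (simp add: monom_altdef)
  then have "pCons c p ^ CARD('a) = [:c:] ^ CARD('a) + (monom 1 1 * p) ^ CARD('a)"
    by (simp only: add_power_card_UNIV)
  also have "\<dots> = [:c:] + monom 1 CARD('a) * p ^ CARD('a)"
    by (simp add: power_mult_distrib poly_const_pow power_card_UNIV_eq_self monom_power)
  finally show ?case
    using pCons by (simp add: pcompose_pCons)
qed

lemma frobenius_eq_power_mod: "frobenius h g = g ^ CARD('a) mod h"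
  for h g :: "'a::{field_gcd,finite} poly"
  by (simp add: frobenius_def pcompose_monom_card_UNIV)

lemma funpow_frobenius:
  fixes h g :: "'a::{field_gcd,finite} poly"
  assumes "g mod h = g"
  shows "(frobenius h ^^ k) g = g ^ (CARD('a) ^ k) mod h"
proof (induction k)
  case 0
  then show ?case
    using assms by simp
next
  case (Suc k)
  then show ?case
    by (simp add: frobenius_eq_power_mod power_mod mult.commute flip: power_mult)
qed

lemma frobenius_order_prod_primes_le_Lcm:
  fixes P :: "'a::{field_gcd,finite} poly set"
  assumes "finite P" and primes: "\<And>p. p \<in> P \<Longrightarrow> prime p"
  shows "frobenius_order (\<Prod>P) \<le> Lcm (degree ` P)"
proof -
  define K where "K = Lcm (degree ` P)"
  have "0 \<notin> degree ` P"
    using primes prime_elem_imp_degree_pos by fastforce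
  then have "K \<noteq> 0"
    unfolding K_def using \<open>finite P\<close> by (subst Lcm_0_iff) auto
  moreover have "(frobenius (\<Prod>P) ^^ K) g = g" if "g mod \<Prod>P = g" for g
  proof -
    have "[g ^ (CARD('a) ^ K) = g] (mod p)" if "p \<in> P" for p
      using fermat_theorem_poly_multiple[of p] primes[OF that] that by (auto simp: K_def)
    moreover have "\<forall>p\<in>P. \<forall>q\<in>P. p \<noteq> q \<longrightarrow> coprime p q"
      using primes primes_coprime by blast
    ultimately have "[g ^ (CARD('a) ^ K) = g] (mod \<Prod>P)"
      using cong_cong_prod_coprime[of P "g ^ (CARD('a) ^ K)" g "\<lambda>p. p"] by simp
    then show ?thesis
      using funpow_frobenius[OF \<open>g mod \<Prod>P = g\<close>] \<open>g mod \<Prod>P = g\<close> by (simp add: cong_def)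
  qed
  ultimately show ?thesis
    unfolding frobenius_order_def K_def by (intro Least_le) simp
qed

lemma sum_degree_le_of_subset_prime_factors:
  fixes f :: "'a::field_gcd poly"
  assumes "f \<noteq> 0" and "P \<subseteq> prime_factors f"
  shows "(\<Sum>p\<in>P. degree p) \<le> degree f"
proof -
  have primes: "prime p" if "p \<in> P" for p
    using that assms by auto
  have "[f = 0] (mod p)" if "p \<in> P" for p
    using that assms by (auto simp: cong_0_iff)
  moreover have "\<forall>p\<in>P. \<forall>q\<in>P. p \<noteq> q \<longrightarrow> coprime p q"
    using primes primes_coprime by blast
  ultimately have "\<Prod>P dvd f"
    using cong_cong_prod_coprime[of P f 0 "\<lambda>p. p"] by (simp add: cong_0_iff)
  then have "degree (\<Prod>P) \<le> degree f"
    using assms(1) by (rule dvd_imp_degree_le)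
  moreover have "degree (\<Prod>P) = (\<Sum>p\<in>P. degree p)"
    by (rule degree_prod_eq_sum_degree) (use primes not_prime_0 in blast)
  ultimately show ?thesis
    by simp
qed

lemma card_less_of_sum_le:
  fixes x :: "'i \<Rightarrow> real"
  assumes "finite I" "0 < a" "0 < t"
    and "\<And>i. i \<in> I \<Longrightarrow> a < x i" "(\<Sum>i\<in>I. x i) \<le> a * t"
  shows "real (card I) < t"
proof (cases "I = {}")
  case True
  then show ?thesis
    using \<open>0 < t\<close> by simp
next
  case False
  have "real (card I) * a = (\<Sum>i\<in>I. a)"
    by simp
  also have "\<dots> < (\<Sum>i\<in>I. x i)"
    using assms False by (intro sum_strict_mono) auto
  also have "\<dots> \<le> t * a"
    using assms by (simp add: mult.commute)
  finally show ?thesis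
    using \<open>0 < a\<close> by simp
qed

lemma prod_less_exp_of_sum_le:
  fixes x :: "'i \<Rightarrow> real"
  assumes "finite I" "exp 1 < a" "0 < t"
    and large: "\<And>i. i \<in> I \<Longrightarrow> a < x i" and sum_le: "(\<Sum>i\<in>I. x i) \<le> a * t"
  shows "(\<Prod>i\<in>I. x i) < exp (t * ln a)"
proof -
  have "0 < a"
    using \<open>exp 1 < a\<close> exp_gt_zero less_trans by blast
  have "1 < ln a"
    using ln_less_cancel_iff[of "exp 1" a] \<open>0 < a\<close> \<open>exp 1 < a\<close> by simp
  have pos: "0 < x i" if "i \<in> I" for i
    using large[OF that] \<open>0 < a\<close> by simp
  have ln_le: "ln (x i) \<le> ln a - 1 + x i / a" if "i \<in> I" for i
    using ln_le_minus_one[of "x i / a"] pos[OF that] \<open>0 < a\<close> by (simp add: ln_div)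
  have "ln (\<Prod>i\<in>I. x i) = (\<Sum>i\<in>I. ln (x i))"
    by (rule ln_prod) (use \<open>finite I\<close> pos in force)+
  also have "\<dots> \<le> (\<Sum>i\<in>I. ln a - 1 + x i / a)"
    by (rule sum_mono) (rule ln_le)
  also have "\<dots> = real (card I) * (ln a - 1) + (\<Sum>i\<in>I. x i) / a"
    by (simp add: sum.distrib sum_divide_distrib)
  also have "\<dots> \<le> real (card I) * (ln a - 1) + t"
    using sum_le \<open>0 < a\<close> by (simp add: divide_le_eq mult.commute)
  also have "\<dots> < t * (ln a - 1) + t"
    using card_less_of_sum_le[OF \<open>finite I\<close> \<open>0 < a\<close> \<open>0 < t\<close> large sum_le] \<open>1 < ln a\<close>
    by simp
  finally have "ln (\<Prod>i\<in>I. x i) < t * ln a"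
    by (simp add: algebra_simps)
  then show ?thesis
    using pos by (metis exp_less_cancel_iff exp_ln prod_pos)
qed

lemma exp_1_less_powr_two_thirds:
  fixes x :: real
  assumes "5 \<le> x"
  shows "exp 1 < x powr (2/3)"
proof -
  have "exp 3 = exp (1::real) ^ 3"
    by (simp flip: exp_of_nat_mult)
  also have "\<dots> < (272/100) ^ 3"
    using e_less_272 by (intro power_strict_mono) auto
  also have "\<dots> < 5 ^ 2"
    by (simp add: power3_eq_cube)
  also have "\<dots> \<le> x ^ 2"
    using assms by (intro power_mono) auto
  finally have "ln (exp 3) < ln (x ^ 2)"
    using assms by (subst ln_less_cancel_iff) auto
  then have "ln (exp 1) < ln (x powr (2/3))"
    using assms by (simp add: ln_realpow)
  then show ?thesis
    using assms by (subst (asm) ln_less_cancel_iff) auto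
qed

lemma root_3_4_bounds: "3/2 < root 3 (4::real)" "root 3 (4::real) < 2"
proof -
  have "root 3 (27/8) = (3/2 :: real)"
    using real_root_pos_unique[of 3 "3/2" "27/8"] by (simp add: power_divide)
  moreover have "root 3 (27/8) < root 3 (4::real)"
    by (rule real_root_less_mono) auto
  ultimately show "3/2 < root 3 (4::real)"
    by linarith
  have "root 3 8 = (2 :: real)"
    using real_root_pos_unique[of 3 2 8] by simp
  moreover have "root 3 4 < root 3 (8::real)"
    by (rule real_root_less_mono) auto
  ultimately show "root 3 (4::real) < 2"
    by linarith
qed

lemma prod_less_exp_of_large_parts:
  fixes d :: "'i \<Rightarrow> nat" and n :: nat
  assumes "finite P" "4 \<le> n"
    and large: "\<And>p. p \<in> P \<Longrightarrow> real n powr (2/3) < real (d p)"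
    and sum_le: "(\<Sum>p\<in>P. d p) \<le> n"
  shows "real (\<Prod>p\<in>P. d p) < exp (2/3 * root 3 (real n) * ln (real n))"
proof -
  define a where "a = real n powr (2/3)"
  define t where "t = root 3 (real n)"
  have "0 < a" "0 < t"
    using assms by (simp_all add: a_def t_def)
  have "a * t = real n"
    using assms by (simp add: a_def t_def root_powr_inverse flip: powr_add)
  then have sum_le_at: "(\<Sum>p\<in>P. real (d p)) \<le> a * t"
    using sum_le by (simp flip: of_nat_sum)
  have exp_at: "exp (2/3 * root 3 (real n) * ln (real n)) = exp (t * ln a)"
    by (simp add: a_def t_def)
  show ?thesis
  proof (cases "n = 4")
    case False
    then have "exp 1 < a"
      using \<open>4 \<le> n\<close> exp_1_less_powr_two_thirds[of "real n"] by (simp add: a_def)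
    then have "(\<Prod>p\<in>P. real (d p)) < exp (t * ln a)"
      using large by (intro prod_less_exp_of_sum_le[OF \<open>finite P\<close> _ \<open>0 < t\<close> _ sum_le_at])
        (auto simp: a_def)
    then show ?thesis
      by (simp only: exp_at of_nat_prod)
  next
    \<comment> \<open>Here ln a < 1, but a part exceeds 4^(2/3) > 2, so there is at most one.\<close>
    case True
    then have "real (card P) < 2"
      using card_less_of_sum_le[OF \<open>finite P\<close> \<open>0 < a\<close> \<open>0 < t\<close> _ sum_le_at]
        large root_3_4_bounds(2) by (simp add: a_def t_def)
    then have "real (\<Prod>p\<in>P. d p) \<le> 4"
      using sum_le True \<open>finite P\<close> by (auto simp: less_2_cases_iff card_1_singleton_iff)
    also have "(4::real) < exp (2/3 * root 3 4 * ln 4)"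
    proof -
      have "1 * ln 4 < (2/3 * root 3 4) * ln (4::real)"
        using root_3_4_bounds(1) by (intro mult_strict_right_mono) auto
      then show ?thesis
        by (metis exp_less_cancel_iff exp_ln mult_1 zero_less_numeral)
    qed
    finally show ?thesis
      using True by (simp only: of_nat_numeral)
  qed
qed

theorem lemma1:
  fixes f :: "'a::{field_gcd,finite} poly" and n :: nat
  assumes "squarefree f" and "degree f = n" and "n \<ge> 4"
  shows "real (frobenius_order (high_part f)) < exp (2/3 * root 3 (real n) * ln (real n))"
proof -
  define P where "P = {p \<in> prime_factors f. real (degree p) > real (degree f) powr (2/3)}"
  have "f \<noteq> 0"
    using assms(2,3) by auto
  have "finite P" and primes: "\<And>p. p \<in> P \<Longrightarrow> prime p"
    by (auto simp: P_def)
  have "frobenius_order (high_part f) \<le> Lcm (degree ` P)"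
    unfolding high_part_def P_def[symmetric]
    using \<open>finite P\<close> primes by (rule frobenius_order_prod_primes_le_Lcm)
  also have "\<dots> \<le> (\<Prod>p\<in>P. degree p)"
    using \<open>finite P\<close> primes prime_elem_imp_degree_pos
    by (intro dvd_imp_le Lcm_least) (auto simp: prod_pos)
  finally have "real (frobenius_order (high_part f)) \<le> real (\<Prod>p\<in>P. degree p)"
    by linarith
  also have "\<dots> < exp (2/3 * root 3 (real n) * ln (real n))"
    using \<open>finite P\<close> \<open>n \<ge> 4\<close>
  proof (rule prod_less_exp_of_large_parts)
    show "real n powr (2/3) < real (degree p)" if "p \<in> P" for p
      using that assms(2) by (simp add: P_def)
    show "(\<Sum>p\<in>P. degree p) \<le> n"
      using sum_degree_le_of_subset_prime_factors[OF \<open>f \<noteq> 0\<close>, of P] assms(2) by (auto simp: P_def)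
  qed
  finally show ?thesis .
qed

end
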